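(* Let $p$ be a prime and $n$ a positive integer. Then $\mathbb{Z}_n$ admits a proper skew morphism of order $p$ if and only if $p$ divides $n$ and $\gcd(p-1,n)\ge2$. The proper skew morphisms of $\mathbb{Z}_n$ of order $p$ are exactly the permutations $a\mapsto a+u(1+v+v^2+\dots+v^{a-1})$ (for $a\in\{0,1,\dots,n-1\}$), where $u\in\{\tfrac{n}{p},\tfrac{2n}{p},\dots,\tfrac{(p-1)n}{p}\}$ and $v\in\{2,3,\dots,p-1\}$ is such that its multiplicative order modulo $p$ divides $n$. The number of such skew morphisms is $$\Big(\sum_{\substack{k\mid p-1,\ k\mid n\\ k\neq1}}\phi(k)\Big)(p-1),$$ where $\phi$ is Euler's totient function. In particular, $\mathbb{Z}_n$ has at most $p^2-3p+2$ proper skew morphisms of order $p$, with equality if and only if $(p-1)p$ divides $n$.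
   Context: $\mathbb{Z}_n$ is the cyclic group of integers modulo $n$. A skew morphism of a finite group $G$ is a permutation $\varphi$ of $G$ fixing the identity such that for each $a\in G$ there is a non-negative integer $i_a$ with $\varphi(ab)=\varphi(a)\varphi^{i_a}(b)$ for all $b\in G$. A skew morphism that is not a group automorphism is called proper. The order of $\varphi$ is the order of the cyclic group $\langle\varphi\rangle$. *)

theory Defs
  imports "HOL-Number_Theory.Number_Theory"
begin

text \<open>The cyclic group Z_n is modelled by the carrier {0..<n} of nat with addition mod n.
  A map of Z_n is a function nat => nat, only its values on {0..<n} matter.\<close>

definition skew_morphism :: "nat \<Rightarrow> (nat \<Rightarrow> nat) \<Rightarrow> bool" where
  "skew_morphism n \<phi> \<longleftrightarrow>
     bij_betw \<phi> {0..<n} {0..<n} \<and> \<phi> 0 = 0 \<and>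
     (\<forall>a<n. \<exists>i::nat. \<forall>b<n. \<phi> ((a + b) mod n) = (\<phi> a + (\<phi> ^^ i) b) mod n)"

definition is_automorphism :: "nat \<Rightarrow> (nat \<Rightarrow> nat) \<Rightarrow> bool" where
  "is_automorphism n \<phi> \<longleftrightarrow>
     bij_betw \<phi> {0..<n} {0..<n} \<and>
     (\<forall>a<n. \<forall>b<n. \<phi> ((a + b) mod n) = (\<phi> a + \<phi> b) mod n)"

definition proper_skew_morphism :: "nat \<Rightarrow> (nat \<Rightarrow> nat) \<Rightarrow> bool" where
  "proper_skew_morphism n \<phi> \<longleftrightarrow> skew_morphism n \<phi> \<and> \<not> is_automorphism n \<phi>"

definition perm_order :: "nat \<Rightarrow> (nat \<Rightarrow> nat) \<Rightarrow> nat" where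
  "perm_order n \<phi> = (LEAST k. 0 < k \<and> (\<forall>x<n. (\<phi> ^^ k) x = x))"

text \<open>The set of proper skew morphisms of Z_n of order p, normalised to be the identity
  outside the carrier {0..<n} (so that distinct maps of Z_n are distinct functions).\<close>
definition proper_skews_of_order :: "nat \<Rightarrow> nat \<Rightarrow> (nat \<Rightarrow> nat) set" where
  "proper_skews_of_order n p =
     {\<phi>. (\<forall>x. n \<le> x \<longrightarrow> \<phi> x = x) \<and> proper_skew_morphism n \<phi> \<and> perm_order n \<phi> = p}"

definition skew_formula :: "nat \<Rightarrow> nat \<Rightarrow> nat \<Rightarrow> nat \<Rightarrow> nat" where
  "skew_formula n u v a = (if a < n then (a + u * (\<Sum>i<a. v ^ i)) mod n else a)"

end

(*
  Let f be a proper skew morphism of Z_n of prime order p, with power function \<pi> taken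
  modulo p.  The kernel K = {a. \<pi> a = 1} is fixed pointwise by f and \<pi> is constant on its
  cosets.  Because p is prime, a pigeonhole argument along orbits shows that f moves every point
  by an element of K; hence \<pi> is a homomorphism to the multiplicative group mod p, so
  \<pi> a = v^a for v = \<pi> 1 with ord p v dividing n, and f is determined by u = f 1 - 1 via
  f a = a + u (1 + v + ... + v^(a-1)).  Returning to 1 after p steps forces n | p u, which
  gives p | n and u = k n/p with 0 < k < p.

  Conversely, for such k and v the formula is periodic in a modulo n/p because v^(n/p) = 1
  mod p, which makes it a proper skew morphism of order p; the pair (k, v) is recovered from
  the values at 1 and 2.  Counting the v in {2..p-1} by their order modulo p gives the totient
  sum, and all of them are admissible exactly when p - 1 divides n.
*)

theory Submission
  imports Defs "HOL-Combinatorics.Cycles"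
begin

section \<open>Permutations of {0..<n} and their order\<close>

locale carrier_perm =
  fixes n :: nat and f :: "nat \<Rightarrow> nat"
  assumes bij: "bij_betw f {0..<n} {0..<n}"
begin

lemma f_lt: "x < n \<Longrightarrow> f x < n"
  using bij by (auto dest: bij_betw_apply)

lemma funpow_lt: "x < n \<Longrightarrow> (f ^^ k) x < n"
  by (induction k) (auto simp: f_lt)

lemma funpow_inj: "x < n \<Longrightarrow> y < n \<Longrightarrow> (f ^^ k) x = (f ^^ k) y \<Longrightarrow> x = y"
  using bij_betw_funpow[OF bij] unfolding bij_betw_def inj_on_def by auto

lemma ex_period: "\<exists>k>0. \<forall>x<n. (f ^^ k) x = x"
proof -
  define g where "g x = (if x < n then f x else x)" for x
  have "g permutes {0..<n}"
  proof (rule bij_imp_permutes)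
    show "bij_betw g {0..<n} {0..<n}"
      using bij by (rule bij_betw_cong[THEN iffD1, rotated]) (simp add: g_def)
  qed (simp add: g_def)
  then obtain k where "g ^^ k = id" "k > 0"
    using permutation_is_nilpotent permutes_imp_permutation by blast
  moreover have "(g ^^ j) x = (f ^^ j) x" if "x < n" for x j
    using that by (induction j) (auto simp: g_def funpow_lt)
  ultimately show ?thesis by (metis id_apply)
qed

lemma perm_order_pos: "0 < perm_order n f"
  using LeastI_ex[OF ex_period] unfolding perm_order_def by blast

lemma funpow_perm_order: "x < n \<Longrightarrow> (f ^^ perm_order n f) x = x"
  using LeastI_ex[OF ex_period] unfolding perm_order_def by blast

lemma funpow_mult_perm_order: "x < n \<Longrightarrow> (f ^^ (perm_order n f * q)) x = x"
  by (induction q) (simp_all add: funpow_add funpow_perm_order funpow_lt)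

lemma funpow_mod_perm_order: "x < n \<Longrightarrow> (f ^^ (k mod perm_order n f)) x = (f ^^ k) x"
proof -
  assume x: "x < n"
  define q where "q = k div perm_order n f"
  have "(f ^^ k) x = (f ^^ (k mod perm_order n f + perm_order n f * q)) x"
    by (simp add: q_def)
  also have "\<dots> = (f ^^ (k mod perm_order n f)) ((f ^^ (perm_order n f * q)) x)"
    by (simp add: funpow_add)
  finally show ?thesis using funpow_mult_perm_order x by simp
qed

lemma funpow_id_iff: "(\<forall>x<n. (f ^^ k) x = x) \<longleftrightarrow> perm_order n f dvd k"
proof
  assume id: "\<forall>x<n. (f ^^ k) x = x"
  have "k mod perm_order n f < perm_order n f"
    using perm_order_pos by simp
  then have "\<not> (0 < k mod perm_order n f \<and> (\<forall>x<n. (f ^^ (k mod perm_order n f)) x = x))"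
    using not_less_Least unfolding perm_order_def by blast
  then show "perm_order n f dvd k"
    using id funpow_mod_perm_order by (simp add: mod_eq_0_iff_dvd)
next
  assume "perm_order n f dvd k"
  then show "\<forall>x<n. (f ^^ k) x = x"
    using funpow_mult_perm_order by (auto elim: dvdE)
qed

lemma funpow_eq_iff: "(\<forall>x<n. (f ^^ i) x = (f ^^ j) x) \<longleftrightarrow> [i = j] (mod perm_order n f)"
proof -
  have le: "(\<forall>x<n. (f ^^ i) x = (f ^^ j) x) \<longleftrightarrow> [j = i] (mod perm_order n f)"
    if "i \<le> j" for i j
  proof -
    have comp: "(f ^^ j) x = (f ^^ i) ((f ^^ (j - i)) x)" for x
      using that funpow_add[of i "j - i" f] by simp
    have "(\<forall>x<n. (f ^^ i) x = (f ^^ j) x) \<longleftrightarrow> (\<forall>x<n. (f ^^ (j - i)) x = x)"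
    proof (intro iffI allI impI)
      fix x assume "\<forall>x<n. (f ^^ i) x = (f ^^ j) x" and x: "x < n"
      then have "(f ^^ i) x = (f ^^ i) ((f ^^ (j - i)) x)" using comp by simp
      then show "(f ^^ (j - i)) x = x" using funpow_inj funpow_lt x by metis
    qed (simp add: comp)
    also have "\<dots> \<longleftrightarrow> [j = i] (mod perm_order n f)"
      using that by (simp add: funpow_id_iff cong_altdef_nat)
    finally show ?thesis .
  qed
  show ?thesis
  proof (cases "i \<le> j")
    case True
    then show ?thesis using le by (simp add: cong_sym_eq)
  next
    case False
    have "(\<forall>x<n. (f ^^ i) x = (f ^^ j) x) \<longleftrightarrow> (\<forall>x<n. (f ^^ j) x = (f ^^ i) x)"
      by metis
    then show ?thesis using le[of j i] False by simp
  qed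
qed

lemma fixed_if_coprime_power:
  assumes "coprime e (perm_order n f)" and "y < n" and "(f ^^ e) y = y"
  shows "f y = y"
proof -
  obtain l where l: "[e * l = 1] (mod perm_order n f)"
    using assms(1) cong_solve_coprime_nat by auto
  have "(f ^^ (e * l)) y = y"
    using assms(3) by (induction l) (simp_all add: funpow_add)
  have "f y = (f ^^ (1 mod perm_order n f)) y"
    using funpow_mod_perm_order[OF assms(2), of 1] by simp
  also have "\<dots> = (f ^^ (e * l)) y"
    using l funpow_mod_perm_order[OF assms(2), of "e * l"] by (simp add: cong_def)
  finally show ?thesis using \<open>(f ^^ (e * l)) y = y\<close> by simp
qed

end

section \<open>Proper skew morphisms of prime order\<close>

lemma add_mod_diff_cancel: "a < n \<Longrightarrow> x < n \<Longrightarrow> (a + (x + (n - a)) mod n) mod n = (x::nat)"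
  by (simp add: mod_add_right_eq)

lemma cong_mod_mult_if_dvd:
  fixes x u p n :: nat
  assumes "n dvd p * u"
  shows "[(x mod p) * u = x * u] (mod n)"
proof -
  have "x * u = (x mod p) * u + (x div p) * (p * u)"
    using div_mult_mod_eq[of x p] by (metis add.commute add_mult_distrib mult.assoc mult.commute)
  moreover have "[(x mod p) * u + (x div p) * (p * u) = (x mod p) * u + 0] (mod n)"
    using assms by (intro cong_add) (auto simp: cong_0_iff)
  ultimately show ?thesis by (simp add: cong_sym)
qed

lemma add_mod_cancel_left: "x < n \<Longrightarrow> y < n \<Longrightarrow> (c + x) mod n = (c + y) mod n \<Longrightarrow> x = (y::nat)"
  by (metis cong_add_lcancel_nat cong_def cong_less_modulus_unique_nat)

lemma coprime_of_lt_prime: "prime p \<Longrightarrow> 0 < e \<Longrightarrow> e < p \<Longrightarrow> coprime e (p::nat)"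
  by (metis coprime_commute nat_dvd_not_less prime_imp_coprime_nat)

locale proper_skew_prime_order =
  fixes n p :: nat and f :: "nat \<Rightarrow> nat"
  assumes prime: "prime p" and skew: "skew_morphism n f" and order: "perm_order n f = p"
    and proper: "\<not> is_automorphism n f"
begin

sublocale carrier_perm n f
  using skew by unfold_locales (simp add: skew_morphism_def)

lemma p_gt_1: "1 < p"
  using prime prime_gt_1_nat by blast

lemma f_0: "f 0 = 0"
  using skew by (simp add: skew_morphism_def)

lemma funpow_id_iff_dvd: "(\<forall>x<n. (f ^^ k) x = x) \<longleftrightarrow> p dvd k"
  using funpow_id_iff order by simp

lemma f_not_id: "\<exists>x<n. f x \<noteq> x"
  using funpow_id_iff_dvd[of 1] p_gt_1 by auto

lemma n_gt_1: "1 < n"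
proof -
  obtain x where "x < n" "f x \<noteq> x"
    using f_not_id by blast
  then have "0 < x" using f_0 by (cases x) auto
  then show ?thesis using \<open>x < n\<close> by simp
qed

definition power_fun :: "nat \<Rightarrow> nat" where
  "power_fun a = (SOME i. \<forall>b<n. f ((a + b) mod n) = (f a + (f ^^ i) b) mod n) mod p"

lemma skew_power_fun:
  assumes a: "a < n" and b: "b < n"
  shows "f ((a + b) mod n) = (f a + (f ^^ power_fun a) b) mod n"
proof -
  define i where "i = (SOME i. \<forall>b<n. f ((a + b) mod n) = (f a + (f ^^ i) b) mod n)"
  have "\<exists>i. \<forall>b<n. f ((a + b) mod n) = (f a + (f ^^ i) b) mod n"
    using skew a unfolding skew_morphism_def by blast
  then have "\<forall>b<n. f ((a + b) mod n) = (f a + (f ^^ i) b) mod n"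
    unfolding i_def by (rule someI_ex)
  moreover have "(f ^^ power_fun a) b = (f ^^ i) b"
    using funpow_mod_perm_order[OF b, of i] unfolding power_fun_def i_def order .
  ultimately show ?thesis using b by simp
qed

lemma power_fun_lt: "power_fun a < p"
  unfolding power_fun_def using p_gt_1 by simp

lemma power_fun_unique:
  assumes a: "a < n" and j: "\<forall>b<n. f ((a + b) mod n) = (f a + (f ^^ j) b) mod n"
  shows "power_fun a = j mod p"
proof -
  have "\<forall>b<n. (f ^^ power_fun a) b = (f ^^ j) b"
  proof (intro allI impI)
    fix b assume b: "b < n"
    have "(f a + (f ^^ power_fun a) b) mod n = (f a + (f ^^ j) b) mod n"
      using skew_power_fun[OF a b] j b by simp
    then show "(f ^^ power_fun a) b = (f ^^ j) b"
      using add_mod_cancel_left funpow_lt b by blast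
  qed
  then show ?thesis
    using funpow_eq_iff power_fun_lt order by (simp add: cong_def)
qed

lemma power_fun_0: "power_fun 0 = 1"
  using power_fun_unique[of 0 1] f_0 f_lt n_gt_1 p_gt_1 by simp

(* If the power function vanishes at a, then f is a translation fixing 0, i.e. the identity. *)
lemma power_fun_neq_0:
  assumes a: "a < n" shows "power_fun a \<noteq> 0"
proof
  assume "power_fun a = 0"
  then have translate: "f ((a + b) mod n) = (f a + b) mod n" if "b < n" for b
    using skew_power_fun[OF a that] by simp
  have "(f a + (0 + (n - a)) mod n) mod n = 0"
    using translate[of "(0 + (n - a)) mod n"] add_mod_diff_cancel[OF a, of 0] f_0 n_gt_1 by simp
  then have shift_0: "[f a + (n - a) = 0] (mod n)"
    by (simp add: cong_def mod_add_right_eq)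
  have "f x = x" if x: "x < n" for x
  proof -
    have "f x = (f a + (x + (n - a)) mod n) mod n"
      using translate[of "(x + (n - a)) mod n"] add_mod_diff_cancel[OF a x] n_gt_1 by simp
    then have "[f x = x + (f a + (n - a))] (mod n)"
      by (simp add: cong_def mod_add_right_eq ac_simps)
    also have "[x + (f a + (n - a)) = x + 0] (mod n)"
      using shift_0 by (rule cong_add_lcancel_nat[THEN iffD2])
    finally show ?thesis using f_lt[OF x] x by (simp add: cong_def)
  qed
  then show False using f_not_id by blast
qed

lemma ex_power_fun_neq_1: "\<exists>b<n. power_fun b \<noteq> 1"
proof (rule ccontr)
  assume "\<not> (\<exists>b<n. power_fun b \<noteq> 1)"
  then have "\<forall>a<n. \<forall>b<n. f ((a + b) mod n) = (f a + f b) mod n"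
    using skew_power_fun by fastforce
  then show False using proper bij unfolding is_automorphism_def by blast
qed

definition kernel :: "nat set" where
  "kernel = {k. k < n \<and> power_fun k = 1}"

(* For b with power function value j \<noteq> 1, comparing f (b + k) with f (k + b) shows that
  f^(j-1) fixes f k; as j - 1 is prime to p, f itself fixes f k. *)
lemma kernel_fixed:
  assumes "k \<in> kernel" shows "f k = k"
proof -
  have k: "k < n" "power_fun k = 1" using assms by (simp_all add: kernel_def)
  obtain b where b: "b < n" "power_fun b \<noteq> 1"
    using ex_power_fun_neq_1 by blast
  define j where "j = power_fun b"
  have j: "2 \<le> j" "j < p"
    using power_fun_neq_0[OF b(1)] b(2) power_fun_lt unfolding j_def by auto
  have "(f b + (f ^^ j) k) mod n = f ((b + k) mod n)"
    using skew_power_fun[OF b(1) k(1)] by (simp add: j_def)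
  also have "\<dots> = (f b + f k) mod n"
    using skew_power_fun[OF k(1) b(1)] k(2) by (simp add: add.commute)
  finally have "(f ^^ j) k = f k"
    using add_mod_cancel_left funpow_lt f_lt k(1) by blast
  moreover have "(f ^^ j) k = (f ^^ (j - 1)) (f k)"
    using j funpow_Suc_right[of "j - 1" f] by simp
  ultimately have "(f ^^ (j - 1)) (f k) = f k" by simp
  moreover have "coprime (j - 1) p"
    using coprime_of_lt_prime[OF prime] j by simp
  ultimately have "f (f k) = f k"
    using fixed_if_coprime_power f_lt[OF k(1)] order by simp
  then show ?thesis using funpow_inj[of _ _ 1] f_lt k(1) by simp
qed

lemma funpow_kernel_fixed: "k \<in> kernel \<Longrightarrow> (f ^^ m) k = k"
  by (induction m) (simp_all add: kernel_fixed)

lemma kernel_lt: "k \<in> kernel \<Longrightarrow> k < n"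
  by (simp add: kernel_def)

lemma f_translate_kernel_left:
  assumes "k \<in> kernel" and "y < n" shows "f ((k + y) mod n) = (k + f y) mod n"
proof -
  have "power_fun k = 1" and "f k = k"
    using assms(1) kernel_fixed by (simp_all add: kernel_def)
  then show ?thesis
    using skew_power_fun[OF kernel_lt[OF assms(1)] assms(2)] by simp
qed

lemma f_translate_kernel_right:
  assumes "a < n" and "k \<in> kernel" shows "f ((a + k) mod n) = (f a + k) mod n"
  using skew_power_fun[OF assms(1) kernel_lt[OF assms(2)]] funpow_kernel_fixed[OF assms(2)]
  by simp

lemma funpow_translate_kernel_right:
  assumes a: "a < n" and k: "k \<in> kernel"
  shows "(f ^^ m) ((a + k) mod n) = ((f ^^ m) a + k) mod n"
proof (induction m)
  case (Suc m)
  then show ?case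
    using f_translate_kernel_right[OF funpow_lt[OF a] k] by simp
qed (use a in simp)

lemma kernel_add:
  assumes k: "k \<in> kernel" and l: "l \<in> kernel"
  shows "(k + l) mod n \<in> kernel"
proof -
  have "f (((k + l) mod n + b) mod n) = (f ((k + l) mod n) + (f ^^ 1) b) mod n" if b: "b < n" for b
  proof -
    have "f (((k + l) mod n + b) mod n) = f ((k + (l + b) mod n) mod n)"
      by (simp add: mod_simps add.assoc)
    also have "\<dots> = (k + (l + f b) mod n) mod n"
      using f_translate_kernel_left k l b n_gt_1 by simp
    also have "\<dots> = (f ((k + l) mod n) + f b) mod n"
      using f_translate_kernel_left[OF k, of l] kernel_fixed[OF l] kernel_lt[OF l]
      by (simp add: mod_simps add.assoc)
    finally show ?thesis by simp
  qed
  then show ?thesis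
    using power_fun_unique[of "(k + l) mod n" 1] n_gt_1 p_gt_1 by (simp add: kernel_def)
qed

lemma kernel_mult: "k \<in> kernel \<Longrightarrow> (l * k) mod n \<in> kernel"
proof (induction l)
  case 0
  then show ?case using power_fun_0 n_gt_1 by (simp add: kernel_def)
next
  case (Suc l)
  then have "((l * k) mod n + k) mod n \<in> kernel" by (simp add: kernel_add)
  then show ?case by (simp add: mod_simps add.commute)
qed

lemma power_fun_translate_kernel:
  assumes x: "x < n" and k: "k \<in> kernel"
  shows "power_fun ((x + k) mod n) = power_fun x"
proof -
  have "f (((x + k) mod n + y) mod n) = (f ((x + k) mod n) + (f ^^ power_fun x) y) mod n"
    if y: "y < n" for y
  proof -
    have "f (((x + k) mod n + y) mod n) = f ((k + (x + y) mod n) mod n)"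
      by (simp add: mod_simps ac_simps)
    also have "\<dots> = (k + (f x + (f ^^ power_fun x) y) mod n) mod n"
      using f_translate_kernel_left[OF k] skew_power_fun[OF x y] n_gt_1 by simp
    also have "\<dots> = (f ((x + k) mod n) + (f ^^ power_fun x) y) mod n"
      using f_translate_kernel_left[OF k x] by (simp add: mod_simps ac_simps)
    finally show ?thesis .
  qed
  then show ?thesis
    using power_fun_unique[of "(x + k) mod n" "power_fun x"] n_gt_1 power_fun_lt by simp
qed

lemma power_fun_diff_kernel:
  assumes a: "a < n" and b: "b < n" and eq: "power_fun a = power_fun b"
  shows "(a + (n - b)) mod n \<in> kernel"
proof -
  define z where "z = (a + (n - b)) mod n"
  have shift: "[f x + f a = f ((z + x) mod n) + f b] (mod n)" if x: "x < n" for x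
  proof -
    define y where "y = (x + (n - b)) mod n"
    have y: "y < n" and b_y: "(b + y) mod n = x" and a_y: "(a + y) mod n = (z + x) mod n"
      using add_mod_diff_cancel[OF b x] n_gt_1
      by (simp_all add: y_def z_def mod_simps ac_simps)
    have "[f x + f a = (f b + (f ^^ power_fun b) y) + f a] (mod n)"
      using skew_power_fun[OF b y] by (simp add: b_y cong_def mod_simps)
    also have "(f b + (f ^^ power_fun b) y) + f a = (f a + (f ^^ power_fun a) y) + f b"
      by (simp add: eq)
    also have "[\<dots> = f ((z + x) mod n) + f b] (mod n)"
      using skew_power_fun[OF a y] by (simp add: a_y cong_def mod_simps)
    finally show ?thesis .
  qed
  have "[f a = f z + f b] (mod n)"
    using shift[of 0] n_gt_1 f_0 by (simp add: z_def)
  have "f ((z + x) mod n) = (f z + (f ^^ 1) x) mod n" if x: "x < n" for x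
  proof -
    have "[f ((z + x) mod n) + f b = f x + f a] (mod n)"
      using shift[OF x] by (rule cong_sym)
    also have "[f x + f a = (f z + f x) + f b] (mod n)"
      using \<open>[f a = f z + f b] (mod n)\<close> cong_add_lcancel_nat[of "f x" "f a" "f z + f b" n]
      by (simp add: ac_simps)
    finally have "[f ((z + x) mod n) = f z + f x] (mod n)"
      by (simp add: cong_add_rcancel_nat)
    then show ?thesis
      using f_lt x by (simp add: cong_def)
  qed
  then have "power_fun z = 1"
    using power_fun_unique[of z 1] n_gt_1 p_gt_1 by (simp add: z_def)
  then show ?thesis using n_gt_1 by (simp add: kernel_def z_def)
qed

lemma orbit_power_fun_collision:
  assumes a: "a < n"
  obtains i j where "i < j" "j < p" "power_fun ((f ^^ i) a) = power_fun ((f ^^ j) a)"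
proof -
  define g where "g i = power_fun ((f ^^ i) a)" for i
  have "g ` {0..<p} \<subseteq> {1..<p}"
    using power_fun_lt power_fun_neq_0 funpow_lt[OF a] by (auto simp: g_def Suc_le_eq)
  then have "\<not> inj_on g {0..<p}"
    using card_inj_on_le[of g "{0..<p}" "{1..<p}"] p_gt_1 by auto
  then obtain i j where "i < p" "j < p" "i \<noteq> j" "g i = g j"
    unfolding inj_on_def by auto
  then show ?thesis
    using that[of i j] that[of j i] by (cases "i < j") (auto simp: g_def)
qed

lemma funpow_translate_kernel_orbit:
  assumes b: "b < n" and z: "z \<in> kernel" and e: "(f ^^ e) b = (b + z) mod n"
  shows "(f ^^ (e * l)) b = (b + (l * z) mod n) mod n"
proof (induction l)
  case (Suc l)
  have "f ^^ (e * Suc l) = f ^^ (e * l) \<circ> f ^^ e"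
    by (simp add: funpow_add[symmetric] add.commute)
  then have "(f ^^ (e * Suc l)) b = (f ^^ (e * l)) ((b + z) mod n)"
    using e by simp
  also have "\<dots> = ((b + (l * z) mod n) mod n + z) mod n"
    using funpow_translate_kernel_right[OF b z] Suc by simp
  also have "\<dots> = (b + (Suc l * z) mod n) mod n"
    by (simp add: mod_simps ac_simps)
  finally show ?case .
qed (use b in simp)

lemma f_translate_kernel_from_funpow:
  assumes b: "b < n" and e: "0 < e" "e < p" and z: "z \<in> kernel"
    and fe: "(f ^^ e) b = (b + z) mod n"
  shows "\<exists>w\<in>kernel. f b = (b + w) mod n"
proof -
  obtain l where l: "[e * l = 1] (mod p)"
    using cong_solve_coprime_nat coprime_of_lt_prime[OF prime e] by auto
  have "f b = (f ^^ ((e * l) mod p)) b"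
    using l p_gt_1 by (simp add: cong_def)
  also have "\<dots> = (b + (l * z) mod n) mod n"
    using funpow_mod_perm_order[OF b] funpow_translate_kernel_orbit[OF b z fe] order by simp
  finally show ?thesis using kernel_mult[OF z] by blast
qed

(* Two points b and f^e b of the orbit of a have the same power function value (pigeonhole,
  the values lie in {1..<p}), so f^e b = b + z with z in the kernel.  Inverting e modulo p turns
  this into a single step f b = b + w, which is then transported back along the orbit to a. *)
lemma f_translate_kernel:
  assumes a: "a < n" shows "\<exists>w\<in>kernel. f a = (a + w) mod n"
proof -
  obtain i j where ij: "i < j" "j < p" and eq: "power_fun ((f ^^ i) a) = power_fun ((f ^^ j) a)"
    using orbit_power_fun_collision[OF a] by blast
  define b where "b = (f ^^ i) a"
  define z where "z = ((f ^^ j) a + (n - b)) mod n"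
  have b: "b < n" using funpow_lt[OF a] by (simp add: b_def)
  have z: "z \<in> kernel"
    using power_fun_diff_kernel[OF funpow_lt[OF a] b] eq by (simp add: z_def b_def)
  have "(f ^^ (j - i)) b = (f ^^ j) a"
    using ij funpow_add[of "j - i" i f] by (simp add: b_def)
  also have "\<dots> = (b + z) mod n"
    using add_mod_diff_cancel[OF b funpow_lt[OF a]] by (simp add: z_def)
  finally have "\<exists>w\<in>kernel. f b = (b + w) mod n"
    using f_translate_kernel_from_funpow[OF b, of "j - i" z] z ij by simp
  then obtain w where w: "w \<in> kernel" "f b = (b + w) mod n" by blast
  have b_to_a: "(f ^^ (p - i)) b = a"
    using ij funpow_add[of "p - i" i f] funpow_perm_order[OF a] order by (simp add: b_def)
  have "f a = (f ^^ (p - i)) (f b)"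
    using b_to_a funpow_swap1[of f "p - i" b] by simp
  also have "\<dots> = (a + w) mod n"
    using funpow_translate_kernel_right[OF b w(1)] w(2) b_to_a by simp
  finally show ?thesis using w(1) by blast
qed

lemma power_fun_f: "a < n \<Longrightarrow> power_fun (f a) = power_fun a"
  using f_translate_kernel power_fun_translate_kernel by metis

lemma power_fun_funpow: "a < n \<Longrightarrow> power_fun ((f ^^ m) a) = power_fun a"
  by (induction m) (simp_all add: power_fun_f funpow_lt)

lemma funpow_skew:
  assumes b: "b < n" and y: "y < n"
  shows "(f ^^ m) ((b + y) mod n) = ((f ^^ m) b + (f ^^ (m * power_fun b)) y) mod n"
proof (induction m)
  case (Suc m)
  have "(f ^^ Suc m) ((b + y) mod n) = f (((f ^^ m) b + (f ^^ (m * power_fun b)) y) mod n)"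
    using Suc by simp
  also have "\<dots> = ((f ^^ Suc m) b + (f ^^ power_fun b) ((f ^^ (m * power_fun b)) y)) mod n"
    using skew_power_fun funpow_lt b y power_fun_funpow[OF b, of m] by simp
  also have "\<dots> = ((f ^^ Suc m) b + (f ^^ (Suc m * power_fun b)) y) mod n"
    by (simp add: funpow_add)
  finally show ?case .
qed simp

lemma power_fun_add:
  assumes a: "a < n" and b: "b < n"
  shows "power_fun ((a + b) mod n) = (power_fun a * power_fun b) mod p"
proof -
  have "f (((a + b) mod n + y) mod n) = (f ((a + b) mod n) + (f ^^ (power_fun a * power_fun b)) y) mod n"
    if y: "y < n" for y
  proof -
    have "f (((a + b) mod n + y) mod n) = f ((a + (b + y) mod n) mod n)"
      by (simp add: mod_simps add.assoc)
    also have "\<dots> = (f a + ((f ^^ power_fun a) b + (f ^^ (power_fun a * power_fun b)) y) mod n) mod n"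
      using skew_power_fun[OF a] funpow_skew[OF b y] n_gt_1 by simp
    also have "\<dots> = ((f a + (f ^^ power_fun a) b) mod n + (f ^^ (power_fun a * power_fun b)) y) mod n"
      by (simp add: mod_simps add.assoc)
    also have "\<dots> = (f ((a + b) mod n) + (f ^^ (power_fun a * power_fun b)) y) mod n"
      using skew_power_fun[OF a b] by simp
    finally show ?thesis .
  qed
  then show ?thesis
    using power_fun_unique[of "(a + b) mod n"] n_gt_1 by simp
qed

lemma power_fun_eq_pow: "a < n \<Longrightarrow> power_fun a = power_fun 1 ^ a mod p"
proof (induction a)
  case 0
  then show ?case using power_fun_0 p_gt_1 by simp
next
  case (Suc a)
  then have "power_fun (Suc a) = (power_fun a * power_fun 1) mod p"
    using power_fun_add[of a 1] n_gt_1 by simp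
  also have "\<dots> = (power_fun 1 ^ a mod p * power_fun 1) mod p"
    using Suc by simp
  also have "\<dots> = power_fun 1 ^ Suc a mod p"
    by (simp add: mod_mult_right_eq mult.commute)
  finally show ?case .
qed

lemma power_fun_1_pow_n: "[power_fun 1 ^ n = 1] (mod p)"
proof -
  have "power_fun ((n - 1 + 1) mod n) = (power_fun 1 ^ (n - 1) mod p * power_fun 1) mod p"
    using power_fun_add[of "n - 1" 1] power_fun_eq_pow[of "n - 1"] n_gt_1 by simp
  then have "1 = power_fun 1 ^ n mod p"
    using n_gt_1 power_fun_0 by (simp add: mod_mult_left_eq power_Suc2[symmetric] del: power_Suc)
  then show ?thesis using p_gt_1 by (simp add: cong_def)
qed

lemma power_fun_1_bounds: "2 \<le> power_fun 1" "power_fun 1 \<le> p - 1"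
proof -
  have "power_fun 1 \<noteq> 1"
    using power_fun_eq_pow ex_power_fun_neq_1 p_gt_1 by force
  then show "2 \<le> power_fun 1" "power_fun 1 \<le> p - 1"
    using power_fun_neq_0[of 1] n_gt_1 power_fun_lt[of 1] by auto
qed

context
  fixes u :: nat
  assumes u: "u \<in> kernel" and f_1: "f 1 = (1 + u) mod n"
begin

lemma funpow_1: "(f ^^ i) 1 = (1 + i * u) mod n"
proof (induction i)
  case (Suc i)
  have "(f ^^ Suc i) 1 = (f ^^ i) ((1 + u) mod n)"
    using f_1 funpow_swap1[of f i 1] by simp
  also have "\<dots> = (1 + Suc i * u) mod n"
    using funpow_translate_kernel_right[OF _ u, of 1 i] Suc n_gt_1 by (simp add: mod_simps ac_simps)
  finally show ?case .
qed (use n_gt_1 in simp)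

lemma n_dvd_p_mult: "n dvd p * u"
proof -
  have "(1 + p * u) mod n = (1 + 0) mod n"
    using funpow_1[of p] funpow_perm_order[of 1] order n_gt_1 by simp
  then show ?thesis
    by (metis cong_0_iff cong_add_lcancel_nat cong_def)
qed

lemma f_eq_skew_formula: "a < n \<Longrightarrow> f a = skew_formula n u (power_fun 1) a"
proof (induction a)
  case 0
  then show ?case using f_0 by (simp add: skew_formula_def)
next
  case (Suc a)
  define v where "v = power_fun 1"
  have a: "a < n" using Suc by simp
  have "f (Suc a) = (f a + (f ^^ power_fun a) 1) mod n"
    using skew_power_fun[of a 1] a n_gt_1 Suc by simp
  also have "\<dots> = (f a + (1 + (v ^ a mod p) * u) mod n) mod n"
    using funpow_1 power_fun_eq_pow[OF a] by (simp add: v_def)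
  finally have "[f (Suc a) = f a + (1 + (v ^ a mod p) * u)] (mod n)"
    by (simp add: cong_def mod_simps)
  also have "[f a + (1 + (v ^ a mod p) * u) = f a + (1 + v ^ a * u)] (mod n)"
    using cong_mod_mult_if_dvd[OF n_dvd_p_mult] by (intro cong_add cong_refl)
  also have "[f a + (1 + v ^ a * u) = (a + u * (\<Sum>i<a. v ^ i)) + (1 + v ^ a * u)] (mod n)"
    using Suc a by (intro cong_add cong_refl) (simp add: cong_def skew_formula_def v_def)
  also have "(a + u * (\<Sum>i<a. v ^ i)) + (1 + v ^ a * u) = Suc a + u * (\<Sum>i<Suc a. v ^ i)"
    by (simp add: algebra_simps)
  finally show ?case
    using f_lt Suc by (simp add: cong_def skew_formula_def v_def)
qed

end

lemma ex_skew_formula_params: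
  "p dvd n \<and> (\<exists>k v. k \<in> {1..p - 1} \<and> v \<in> {2..p - 1} \<and> ord p v dvd n \<and>
      (\<forall>a<n. f a = skew_formula n (k * (n div p)) v a))"
proof -
  obtain u where u: "u \<in> kernel" "f 1 = (1 + u) mod n"
    using f_translate_kernel[of 1] n_gt_1 by blast
  note formula = f_eq_skew_formula[OF u] and dvd = n_dvd_p_mult[OF u]
  have "u \<noteq> 0"
  proof
    assume "u = 0"
    then have "\<forall>x<n. f x = x" using formula by (simp add: skew_formula_def)
    then show False using f_not_id by blast
  qed
  moreover have "u < n" using u kernel_lt by blast
  ultimately have "\<not> n dvd u" by (auto dest: dvd_imp_le)
  have p_dvd_n: "p dvd n"
  proof (rule ccontr)
    assume "\<not> p dvd n"
    then have "coprime n p"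
      using prime prime_imp_coprime coprime_commute by blast
    then show False
      using dvd \<open>\<not> n dvd u\<close> coprime_dvd_mult_right_iff by blast
  qed
  then have "p * (n div p) dvd p * u"
    using dvd by simp
  then have "n div p dvd u"
    using p_gt_1 by simp
  then obtain k where k: "u = k * (n div p)"
    by (metis dvdE mult.commute)
  have "k * (n div p) < p * (n div p)"
    using k \<open>u < n\<close> p_dvd_n by simp
  then have "k \<in> {1..p - 1}"
    using k \<open>u \<noteq> 0\<close> by (auto simp: Suc_le_eq)
  moreover have "ord p (power_fun 1) dvd n"
    using power_fun_1_pow_n ord_divides by blast
  ultimately show ?thesis
    using p_dvd_n power_fun_1_bounds formula k by auto
qed

end

section \<open>The skew morphisms given by the formula\<close>

lemma geometric_sum_nat: "1 \<le> (v::nat) \<Longrightarrow> (v - 1) * (\<Sum>i<a. v ^ i) + 1 = v ^ a"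
proof (induction a)
  case (Suc a)
  have "(v - 1) * (\<Sum>i<Suc a. v ^ i) + 1 = ((v - 1) * (\<Sum>i<a. v ^ i) + 1) + (v - 1) * v ^ a"
    by (simp add: algebra_simps)
  also have "\<dots> = v ^ Suc a" using Suc by (simp add: algebra_simps)
  finally show ?case .
qed simp

lemma sum_power_add: "(\<Sum>i<a + b. (v::nat) ^ i) = (\<Sum>i<a. v ^ i) + v ^ a * (\<Sum>i<b. v ^ i)"
  by (induction b) (simp_all add: algebra_simps power_add)

lemma ord_dvd_pred_prime:
  fixes p x :: nat
  assumes "prime p" "0 < x" "x < p"
  shows "ord p x dvd p - 1"
proof -
  have "\<not> p dvd x" using assms by (auto dest: dvd_imp_le)
  then show ?thesis using fermat_theorem[OF assms(1)] ord_divides by blast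
qed

lemma ord_neq_1:
  fixes p x :: nat
  assumes "2 \<le> x" "x < p"
  shows "ord p x \<noteq> 1"
  using assms ord_eq_Suc_0_iff[of p x] by (simp add: cong_def)

lemma ex_ord_eq:
  fixes p d :: nat
  assumes p: "prime p" and d: "d dvd p - 1" "d \<noteq> 1"
  obtains x where "x \<in> {2..p - 1}" "ord p x = d"
proof -
  have p1: "1 < p" using p prime_gt_1_nat by blast
  then have "d \<noteq> 0" using d by (intro notI) simp
  then have "card {x \<in> totatives p. ord p x = d} = totient d" "0 < totient d"
    using prime_card_elements_with_ord_eq_totient[OF p1 p, of d] d by auto
  then obtain x where x: "x \<in> totatives p" "ord p x = d"
    by (metis (mono_tags, lifting) card.empty empty_Collect_eq less_irrefl)
  then have "x \<noteq> 1" "x \<noteq> p" using d p1 by (auto simp: totatives_def)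
  then have "x \<in> {2..p - 1}" using x(1) by (auto simp: totatives_def)
  then show ?thesis using that x(2) by blast
qed

locale skew_formula_params =
  fixes n p k v :: nat
  assumes prime: "prime p" and n_pos: "0 < n" and p_dvd_n: "p dvd n"
    and k: "k \<in> {1..p - 1}" and v: "v \<in> {2..p - 1}" and ord_dvd: "ord p v dvd n"
begin

abbreviation m :: nat where "m \<equiv> n div p"
abbreviation u :: nat where "u \<equiv> k * m"
abbreviation g :: "nat \<Rightarrow> nat" where "g \<equiv> skew_formula n u v"
abbreviation S :: "nat \<Rightarrow> nat" where "S a \<equiv> \<Sum>i<a. v ^ i"

lemma p_gt_1: "1 < p"
  using prime prime_gt_1_nat by blast

lemma n_eq: "n = p * m"
  using p_dvd_n by simp

lemma m_pos: "0 < m"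
  using n_eq n_pos by (cases m) auto

lemma m_dvd_n: "m dvd n"
  using p_dvd_n by (metis dvd_div_mult_self dvd_triv_left)

lemma n_ge_3: "3 \<le> n"
  using v p_dvd_n n_pos dvd_imp_le[of p n] by auto

lemma u_lt: "u < n"
proof -
  have "k < p" using k p_gt_1 by auto
  then have "k * m < p * m" using m_pos by simp
  then show ?thesis using n_eq by linarith
qed

lemma u_mult_mod_n: "(u * z) mod n = ((k * z) mod p) * m"
proof -
  have "(u * z) mod n = ((k * z) * m) mod (p * m)"
    using p_dvd_n by (simp add: ac_simps)
  then show ?thesis by (simp add: mod_mult_mult2)
qed

lemma u_mult_cong_iff: "[u * x = u * y] (mod n) \<longleftrightarrow> [x = y] (mod p)"
proof -
  have "[u * x = u * y] (mod n) \<longleftrightarrow> [k * x = k * y] (mod p)"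
    using m_pos by (simp add: cong_def u_mult_mod_n)
  also have "\<dots> \<longleftrightarrow> [x = y] (mod p)"
    using coprime_of_lt_prime[OF prime] k cong_mult_lcancel_nat[of k p] by auto
  finally show ?thesis .
qed

lemma ord_dvd_m: "ord p v dvd m"
proof -
  have "ord p v dvd p - 1"
    using ord_dvd_pred_prime[OF prime, of v] v by auto
  then have "coprime (ord p v) p"
    using coprime_of_lt_prime[OF prime, of "p - 1"] p_gt_1 coprime_imp_coprime[of "p - 1" p "ord p v" p]
    by auto
  then show ?thesis
    using ord_dvd n_eq by (metis coprime_dvd_mult_right_iff)
qed

lemma S_cong_mod: "[S a = S (a mod m)] (mod p)"
proof -
  have "[v ^ a = v ^ (a mod m) * (v ^ m) ^ (a div m)] (mod p)"
    by (metis div_mult_mod_eq power_add power_mult add.commute mult.commute cong_refl)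
  also have "[v ^ (a mod m) * (v ^ m) ^ (a div m) = v ^ (a mod m) * 1 ^ (a div m)] (mod p)"
    using ord_dvd_m ord_divides by (intro cong_mult cong_refl cong_pow) blast
  finally have "[(v - 1) * S a + 1 = (v - 1) * S (a mod m) + 1] (mod p)"
    using geometric_sum_nat[of v] v by simp
  then have "[(v - 1) * S a = (v - 1) * S (a mod m)] (mod p)"
    by (simp only: cong_add_rcancel_nat)
  moreover have "coprime (v - 1) p"
    using coprime_of_lt_prime[OF prime] v by auto
  ultimately show ?thesis using cong_mult_lcancel_nat by blast
qed

lemma u_S_cong: "a mod m = b mod m \<Longrightarrow> [u * S a = u * S b] (mod n)"
proof -
  assume "a mod m = b mod m"
  then have "[S a = S b] (mod p)"
    using S_cong_mod[of a] S_cong_mod[of b] by (metis cong_sym cong_trans)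
  then show ?thesis
    using u_mult_cong_iff by blast
qed

lemma g_eq: "a < n \<Longrightarrow> g a = (a + u * S a) mod n"
  by (simp add: skew_formula_def)

lemma g_lt: "a < n \<Longrightarrow> g a < n"
  using g_eq n_pos by simp

lemma funpow_g: "a < n \<Longrightarrow> (g ^^ j) a = (a + j * u * S a) mod n"
proof (induction j)
  case (Suc j)
  define x where "x = (a + j * u * S a) mod n"
  have x: "x < n" using n_pos by (simp add: x_def)
  have "x mod m = a mod m"
  proof -
    have "x mod m = (a + m * (j * k * S a)) mod m"
      using m_dvd_n by (simp add: x_def mod_mod_cancel ac_simps)
    then show ?thesis by simp
  qed
  then have "[x + u * S x = x + u * S a] (mod n)"
    using u_S_cong by (intro cong_add cong_refl) blast
  then have "[g x = x + u * S a] (mod n)"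
    using g_eq[OF x] by (simp add: cong_def)
  also have "[x + u * S a = a + Suc j * u * S a] (mod n)"
    by (simp add: x_def cong_def mod_simps algebra_simps)
  finally show ?case
    using Suc g_lt[OF x] by (simp add: x_def cong_def)
qed simp

lemma funpow_g_p: "a < n \<Longrightarrow> (g ^^ p) a = a"
proof -
  assume a: "a < n"
  have "[p * S a = 0] (mod p)"
    by (simp add: cong_0_iff)
  then have "[u * (p * S a) = u * 0] (mod n)"
    using u_mult_cong_iff by blast
  then have "[a + p * u * S a = a + 0] (mod n)"
    by (intro cong_add cong_refl) (simp add: ac_simps)
  then show ?thesis
    using funpow_g[OF a, of p] a by (simp add: cong_def)
qed

lemma g_1: "g 1 = (1 + u) mod n"
  using g_eq[of 1] n_ge_3 by simp

lemma g_2: "g 2 = (2 + u * (1 + v)) mod n"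
  using g_eq[of 2] n_ge_3 by (simp add: numeral_2_eq_2)

lemma funpow_g_1_neq: "0 < j \<Longrightarrow> j < p \<Longrightarrow> (g ^^ j) 1 \<noteq> 1"
proof
  assume j: "0 < j" "j < p" and fix_1: "(g ^^ j) 1 = 1"
  have "(g ^^ j) 1 = (1 + j * u) mod n"
    using funpow_g[of 1 j] n_ge_3 by simp
  then have "[1 + u * j = 1 + u * 0] (mod n)"
    using fix_1 n_ge_3 by (simp add: cong_def ac_simps)
  then have "[j = 0] (mod p)"
    using u_mult_cong_iff cong_add_lcancel_nat by blast
  then show False
    using j by (simp add: cong_def)
qed

lemma perm_order_g: "perm_order n g = p"
  unfolding perm_order_def
proof (rule Least_equality)
  show "0 < p \<and> (\<forall>x<n. (g ^^ p) x = x)"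
    using p_gt_1 funpow_g_p by simp
next
  fix j assume "0 < j \<and> (\<forall>x<n. (g ^^ j) x = x)"
  then show "p \<le> j"
    using funpow_g_1_neq[of j] n_ge_3 by (meson not_le less_le_trans one_less_numeral_iff semiring_norm(77))
qed

lemma bij_g: "bij_betw g {0..<n} {0..<n}"
proof (rule bij_betw_byWitness[where f' = "g ^^ (p - 1)"])
  have p: "Suc (p - 1) = p" using p_gt_1 by simp
  have funpow_lt: "(g ^^ j) a < n" if "a < n" for a j
    using that by (induction j) (simp_all add: g_lt)
  show "\<forall>a\<in>{0..<n}. (g ^^ (p - 1)) (g a) = a"
    using funpow_g_p p by (metis atLeastLessThan_iff funpow_Suc_right comp_apply)
  show "\<forall>a\<in>{0..<n}. g ((g ^^ (p - 1)) a) = a"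
    using funpow_g_p p by (metis atLeastLessThan_iff funpow.simps(2) comp_apply)
  show "g ` {0..<n} \<subseteq> {0..<n}" "(g ^^ (p - 1)) ` {0..<n} \<subseteq> {0..<n}"
    using g_lt funpow_lt by auto
qed

lemma g_skew:
  assumes a: "a < n" and b: "b < n"
  shows "g ((a + b) mod n) = (g a + (g ^^ (v ^ a)) b) mod n"
proof -
  define c where "c = (a + b) mod n"
  have c: "c < n" using n_pos by (simp add: c_def)
  have "c mod m = (a + b) mod m"
    using m_dvd_n by (simp add: c_def mod_mod_cancel)
  moreover have "[c = a + b] (mod n)"
    by (simp add: c_def cong_def)
  ultimately have "[c + u * S c = (a + b) + u * S (a + b)] (mod n)"
    using cong_add u_S_cong by blast
  then have "[g c = (a + b) + u * S (a + b)] (mod n)"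
    using g_eq[OF c] by (simp add: cong_def)
  also have "(a + b) + u * S (a + b) = (a + u * S a) + (b + v ^ a * u * S b)"
    by (simp only: sum_power_add distrib_left add_mult_distrib2 ac_simps)
  also have "[(a + u * S a) + (b + v ^ a * u * S b) = g a + (g ^^ (v ^ a)) b] (mod n)"
    using g_eq[OF a] funpow_g[OF b, of "v ^ a"] by (intro cong_add) (simp_all add: cong_def)
  finally show ?thesis
    using g_lt c by (simp add: c_def cong_def)
qed

lemma g_not_automorphism: "\<not> is_automorphism n g"
proof
  assume "is_automorphism n g"
  moreover have "1 < n" using n_ge_3 by simp
  ultimately have "g ((1 + 1) mod n) = (g 1 + g 1) mod n"
    unfolding is_automorphism_def by blast
  moreover have "(1 + 1) mod n = (2::nat)"
    using n_ge_3 by simp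
  ultimately have "g 2 = (g 1 + g 1) mod n"
    by simp
  then have "(2 + u * (1 + v)) mod n = ((1 + u) + (1 + u)) mod n"
    unfolding g_1 g_2 by (simp add: mod_add_eq)
  then have "[(2 + u) + u * v = (2 + u) + u * 1] (mod n)"
    by (simp add: cong_def algebra_simps)
  then have "[v = 1] (mod p)"
    using u_mult_cong_iff cong_add_lcancel_nat by blast
  then show False
    using v p_gt_1 by (auto simp: cong_def)
qed

lemma g_in_proper_skews_of_order: "g \<in> proper_skews_of_order n p"
proof -
  have "skew_morphism n g"
    unfolding skew_morphism_def using bij_g g_skew by (auto simp: skew_formula_def)
  then show ?thesis
    using g_not_automorphism perm_order_g
    by (simp add: proper_skews_of_order_def proper_skew_morphism_def skew_formula_def)
qed

end

lemma skew_formula_inj: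
  assumes "skew_formula_params n p k v" and "skew_formula_params n p k' v'"
    and eq: "skew_formula n (k * (n div p)) v = skew_formula n (k' * (n div p)) v'"
  shows "k = k' \<and> v = v'"
proof -
  interpret A: skew_formula_params n p k v by fact
  interpret B: skew_formula_params n p k' v' by fact
  have "(1 + A.u) mod n = (1 + B.u) mod n"
    using A.g_1 B.g_1 eq by simp
  then have "A.u = B.u"
    using add_mod_cancel_left A.u_lt B.u_lt by blast
  then have k: "k = k'"
    using A.m_pos by simp
  have "(2 + A.u * (1 + v)) mod n = (2 + A.u * (1 + v')) mod n"
    using A.g_2 B.g_2 eq k by simp
  then have "[(2 + A.u) + A.u * v = (2 + A.u) + A.u * v'] (mod n)"
    by (simp add: cong_def algebra_simps)
  then have "[v = v'] (mod p)"
    using A.u_mult_cong_iff cong_add_lcancel_nat by blast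
  then have "v = v'"
    using A.v B.v A.p_gt_1 by (auto simp: cong_def)
  with k show ?thesis by simp
qed

section \<open>Counting\<close>

definition admissible_multipliers :: "nat \<Rightarrow> nat \<Rightarrow> nat set" where
  "admissible_multipliers n p = {v \<in> {2..p - 1}. ord p v dvd n}"

lemma card_admissible_multipliers:
  fixes p n :: nat
  assumes p: "prime p"
  shows "card (admissible_multipliers n p) = (\<Sum>k \<in> {k. k dvd p - 1 \<and> k dvd n \<and> k \<noteq> 1}. totient k)"
proof -
  define D where "D = {k. k dvd p - 1 \<and> k dvd n \<and> k \<noteq> 1}"
  have p1: "1 < p" using p prime_gt_1_nat by blast
  have "admissible_multipliers n p = (\<Union>d\<in>D. {x \<in> totatives p. ord p x = d})"
  proof (intro equalityI subsetI)
    fix v assume v: "v \<in> admissible_multipliers n p"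
    then have "coprime v p"
      using coprime_of_lt_prime[OF p] by (auto simp: admissible_multipliers_def)
    then have "v \<in> totatives p"
      using v by (auto simp: admissible_multipliers_def totatives_def coprime_commute)
    moreover have "v < p"
      using v p1 by (auto simp: admissible_multipliers_def)
    moreover have "ord p v \<in> D"
      using v ord_dvd_pred_prime[OF p, of v] ord_neq_1[of v p] \<open>v < p\<close>
      by (auto simp: D_def admissible_multipliers_def)
    ultimately show "v \<in> (\<Union>d\<in>D. {x \<in> totatives p. ord p x = d})" by blast
  next
    fix x assume "x \<in> (\<Union>d\<in>D. {x \<in> totatives p. ord p x = d})"
    then obtain d where d: "d \<in> D" "x \<in> totatives p" "ord p x = d" by blast
    then have "x \<noteq> 1" "x \<noteq> p" using p1 by (auto simp: D_def totatives_def)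
    then show "x \<in> admissible_multipliers n p"
      using d by (auto simp: D_def admissible_multipliers_def totatives_def)
  qed
  also have "card \<dots> = (\<Sum>d\<in>D. card {x \<in> totatives p. ord p x = d})"
  proof (rule card_UN_disjoint)
    show "finite D"
      using p1 by (auto simp: D_def intro: finite_subset[OF _ finite_divisors_nat[of "p - 1"]])
  qed auto
  also have "\<dots> = (\<Sum>d\<in>D. totient d)"
    using prime_card_elements_with_ord_eq_totient[OF p1 p] by (intro sum.cong) (auto simp: D_def)
  finally show ?thesis by (simp add: D_def)
qed

lemma admissible_multipliers_nonempty_iff:
  fixes p n :: nat
  assumes p: "prime p" and n: "0 < n"
  shows "admissible_multipliers n p \<noteq> {} \<longleftrightarrow> 2 \<le> gcd (p - 1) n"
proof
  assume "admissible_multipliers n p \<noteq> {}"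
  then obtain v where v: "v \<in> {2..p - 1}" "ord p v dvd n"
    by (auto simp: admissible_multipliers_def)
  moreover have "v < p"
    using v prime_gt_1_nat[OF p] by auto
  moreover have "ord p v dvd p - 1"
    using ord_dvd_pred_prime[OF p, of v] v \<open>v < p\<close> by auto
  ultimately have "ord p v dvd gcd (p - 1) n"
    by simp
  moreover have "2 \<le> ord p v"
    using v ord_neq_1[of v p] \<open>ord p v dvd p - 1\<close> \<open>v < p\<close> prime_gt_1_nat[OF p]
    by (cases "ord p v") auto
  moreover have "0 < gcd (p - 1) n"
    using n by simp
  ultimately show "2 \<le> gcd (p - 1) n"
    using dvd_imp_le le_trans by blast
next
  assume "2 \<le> gcd (p - 1) n"
  then obtain v where "v \<in> {2..p - 1}" "ord p v = gcd (p - 1) n"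
    using ex_ord_eq[OF p, of "gcd (p - 1) n"] by auto
  then show "admissible_multipliers n p \<noteq> {}"
    by (auto simp: admissible_multipliers_def)
qed

lemma admissible_multipliers_eq_iff:
  fixes p n :: nat
  assumes p: "prime p"
  shows "admissible_multipliers n p = {2..p - 1} \<longleftrightarrow> p - 1 dvd n"
proof
  assume all: "admissible_multipliers n p = {2..p - 1}"
  show "p - 1 dvd n"
  proof (cases "p - 1 = 1")
    case False
    then obtain x where "x \<in> {2..p - 1}" "ord p x = p - 1"
      using ex_ord_eq[OF p dvd_refl] by blast
    then have "x \<in> admissible_multipliers n p" using all by simp
    then show ?thesis using \<open>ord p x = p - 1\<close> by (simp add: admissible_multipliers_def)
  qed simp
next
  assume "p - 1 dvd n"
  then show "admissible_multipliers n p = {2..p - 1}"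
    using ord_dvd_pred_prime[OF p] dvd_trans by (fastforce simp: admissible_multipliers_def)
qed

lemma skew_formula_params_iff:
  assumes "prime p" "0 < n" "p dvd n"
  shows "skew_formula_params n p k v \<longleftrightarrow> k \<in> {1..p - 1} \<and> v \<in> admissible_multipliers n p"
  using assms by (auto simp: skew_formula_params_def admissible_multipliers_def)

lemma proper_skews_of_orderD:
  assumes p: "prime p" and \<phi>: "\<phi> \<in> proper_skews_of_order n p"
  shows "p dvd n \<and> (\<exists>k v. skew_formula_params n p k v \<and> \<phi> = skew_formula n (k * (n div p)) v)"
proof -
  have outside: "\<forall>x. n \<le> x \<longrightarrow> \<phi> x = x"
    and "proper_skew_morphism n \<phi>" "perm_order n \<phi> = p"
    using \<phi> by (auto simp: proper_skews_of_order_def)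
  then interpret proper_skew_prime_order n p \<phi>
    using p by unfold_locales (simp_all add: proper_skew_morphism_def)
  obtain k v where k: "k \<in> {1..p - 1}" and v: "v \<in> {2..p - 1}" "ord p v dvd n"
    and on_carrier: "\<forall>a<n. \<phi> a = skew_formula n (k * (n div p)) v a"
    using ex_skew_formula_params by blast
  have "\<phi> = skew_formula n (k * (n div p)) v"
  proof
    fix x
    show "\<phi> x = skew_formula n (k * (n div p)) v x"
      using on_carrier outside by (cases "x < n") (auto simp: skew_formula_def)
  qed
  moreover have "skew_formula_params n p k v"
    using p k v ex_skew_formula_params n_gt_1 by unfold_locales auto
  ultimately show ?thesis using ex_skew_formula_params by blast
qed

lemma ex_proper_skew_iff:
  assumes "prime p"
  shows "(\<exists>\<phi>. proper_skew_morphism n \<phi> \<and> perm_order n \<phi> = p) \<longleftrightarrow> proper_skews_of_order n p \<noteq> {}"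
proof
  assume "\<exists>\<phi>. proper_skew_morphism n \<phi> \<and> perm_order n \<phi> = p"
  then obtain \<phi> where "proper_skew_morphism n \<phi>" "perm_order n \<phi> = p"
    by blast
  then interpret proper_skew_prime_order n p \<phi>
    using assms by unfold_locales (simp_all add: proper_skew_morphism_def)
  obtain k v where "k \<in> {1..p - 1}" "v \<in> {2..p - 1}" "ord p v dvd n"
    using ex_skew_formula_params by blast
  then interpret skew_formula_params n p k v
    using assms ex_skew_formula_params n_gt_1 by unfold_locales auto
  show "proper_skews_of_order n p \<noteq> {}"
    using g_in_proper_skews_of_order by blast
qed (auto simp: proper_skews_of_order_def)

lemma proper_skews_of_order_eq_image:
  assumes p: "prime p" and n: "0 < n" and p_dvd_n: "p dvd n"
  shows "proper_skews_of_order n p =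
    (\<lambda>(k, v). skew_formula n (k * (n div p)) v) ` ({1..p - 1} \<times> admissible_multipliers n p)"
proof (intro equalityI subsetI)
  fix \<phi> assume "\<phi> \<in> proper_skews_of_order n p"
  then show "\<phi> \<in> (\<lambda>(k, v). skew_formula n (k * (n div p)) v) ` ({1..p - 1} \<times> admissible_multipliers n p)"
    using proper_skews_of_orderD[OF p] skew_formula_params_iff[OF assms] by fast
next
  fix \<phi> assume "\<phi> \<in> (\<lambda>(k, v). skew_formula n (k * (n div p)) v) ` ({1..p - 1} \<times> admissible_multipliers n p)"
  then obtain k v where "skew_formula_params n p k v" "\<phi> = skew_formula n (k * (n div p)) v"
    using skew_formula_params_iff[OF assms] by auto
  then show "\<phi> \<in> proper_skews_of_order n p"
    using skew_formula_params.g_in_proper_skews_of_order by blast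
qed

lemma card_proper_skews_of_order:
  assumes p: "prime p" and n: "0 < n" and p_dvd_n: "p dvd n"
  shows "card (proper_skews_of_order n p) = (p - 1) * card (admissible_multipliers n p)"
proof -
  have "inj_on (\<lambda>(k, v). skew_formula n (k * (n div p)) v) ({1..p - 1} \<times> admissible_multipliers n p)"
  proof (rule inj_onI)
    fix x y
    assume "x \<in> {1..p - 1} \<times> admissible_multipliers n p" "y \<in> {1..p - 1} \<times> admissible_multipliers n p"
      and eq: "(\<lambda>(k, v). skew_formula n (k * (n div p)) v) x = (\<lambda>(k, v). skew_formula n (k * (n div p)) v) y"
    moreover obtain k v k' v' where "x = (k, v)" "y = (k', v')"
      by (cases x, cases y) blast
    ultimately show "x = y"
      using skew_formula_inj[of n p k v k' v'] skew_formula_params_iff[OF assms] by simp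
  qed
  then show ?thesis
    by (simp add: proper_skews_of_order_eq_image[OF assms] card_image card_cartesian_product)
qed

lemma proper_skews_of_order_empty:
  "prime p \<Longrightarrow> \<not> p dvd n \<Longrightarrow> proper_skews_of_order n p = {}"
  using proper_skews_of_orderD by blast

lemma card_proper_skews_of_order_le:
  assumes p: "prime p" and n: "0 < n"
  shows "card (proper_skews_of_order n p) \<le> (p - 1) * (p - 2)"
proof (cases "p dvd n")
  case True
  have "card (admissible_multipliers n p) \<le> card {2..p - 1}"
    by (rule card_mono) (auto simp: admissible_multipliers_def)
  also have "card {2..p - 1} = p - 2"
    by simp
  finally have "(p - 1) * card (admissible_multipliers n p) \<le> (p - 1) * (p - 2)"
    by (rule mult_le_mono2)
  then show ?thesis
    using card_proper_skews_of_order[OF p n True] by simp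
qed (simp add: proper_skews_of_order_empty[OF p])

lemma card_proper_skews_of_order_eq_max_iff:
  assumes p: "prime p" and n: "0 < n" and p_dvd_n: "p dvd n"
  shows "card (proper_skews_of_order n p) = (p - 1) * (p - 2) \<longleftrightarrow> (p - 1) * p dvd n"
proof -
  have p1: "1 < p" using p prime_gt_1_nat by blast
  have card_range: "card {2..p - 1} = p - 2"
    by simp
  have "card (proper_skews_of_order n p) = (p - 1) * (p - 2)
      \<longleftrightarrow> card (admissible_multipliers n p) = card {2..p - 1}"
    using card_proper_skews_of_order[OF assms] p1 by (simp only: card_range) simp
  also have "\<dots> \<longleftrightarrow> admissible_multipliers n p = {2..p - 1}"
  proof
    have "admissible_multipliers n p \<subseteq> {2..p - 1}"
      by (auto simp: admissible_multipliers_def)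
    then show "card (admissible_multipliers n p) = card {2..p - 1} \<Longrightarrow> admissible_multipliers n p = {2..p - 1}"
      using card_subset_eq by blast
  qed simp
  also have "\<dots> \<longleftrightarrow> p - 1 dvd n"
    by (rule admissible_multipliers_eq_iff[OF p])
  also have "\<dots> \<longleftrightarrow> (p - 1) * p dvd n"
    using p_dvd_n coprime_of_lt_prime[OF p, of "p - 1"] p1
    by (auto intro: divides_mult dvd_mult_left)
  finally show ?thesis .
qed

lemma int_pred_times_diff_2:
  assumes "2 \<le> p" shows "int ((p - 1) * (p - 2)) = int p ^ 2 - 3 * int p + 2"
proof -
  obtain q where "p = q + 2"
    using assms le_Suc_ex by (metis add.commute)
  then show ?thesis by (simp add: power2_eq_square algebra_simps)
qed

lemma proper_skews_of_order_nonempty_iff: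
  assumes p: "prime p" and n: "0 < n"
  shows "proper_skews_of_order n p \<noteq> {} \<longleftrightarrow> p dvd n \<and> 2 \<le> gcd (p - 1) n"
proof (cases "p dvd n")
  case True
  have "{1..p - 1} \<noteq> {}"
    using prime_gt_1_nat[OF p] by simp
  then show ?thesis
    using True proper_skews_of_order_eq_image[OF p n True] admissible_multipliers_nonempty_iff[OF p n]
    by auto
qed (simp add: proper_skews_of_order_empty[OF p])

theorem theorem6p5:
  fixes p n :: nat
  assumes "prime p" and "0 < n"
  shows "((\<exists>\<phi>. proper_skew_morphism n \<phi> \<and> perm_order n \<phi> = p)
            \<longleftrightarrow> (p dvd n \<and> gcd (p - 1) n \<ge> 2))
       \<and> (p dvd n \<longrightarrow> proper_skews_of_order n p =
            {skew_formula n u v | u v. u \<in> {k * (n div p) | k. 1 \<le> k \<and> k \<le> p - 1}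
                                    \<and> v \<in> {2..p - 1} \<and> ord p v dvd n})
       \<and> (p dvd n \<longrightarrow> card (proper_skews_of_order n p) =
            (\<Sum>k \<in> {k. k dvd p - 1 \<and> k dvd n \<and> k \<noteq> 1}. totient k) * (p - 1))
       \<and> int (card (proper_skews_of_order n p)) \<le> int p ^ 2 - 3 * int p + 2
       \<and> (p dvd n \<longrightarrow>
            (int (card (proper_skews_of_order n p)) = int p ^ 2 - 3 * int p + 2
              \<longleftrightarrow> (p - 1) * p dvd n))"
proof -
  note p = assms(1) and n = assms(2)
  have max: "int ((p - 1) * (p - 2)) = int p ^ 2 - 3 * int p + 2"
    using prime_ge_2_nat[OF p] by (rule int_pred_times_diff_2)
  have "p dvd n \<Longrightarrow> proper_skews_of_order n p =
      {skew_formula n u v | u v. u \<in> {k * (n div p) | k. 1 \<le> k \<and> k \<le> p - 1}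
                              \<and> v \<in> {2..p - 1} \<and> ord p v dvd n}"
    using proper_skews_of_order_eq_image[OF p n] by (auto simp: admissible_multipliers_def; blast)
  moreover have "p dvd n \<Longrightarrow> card (proper_skews_of_order n p) =
      (\<Sum>k \<in> {k. k dvd p - 1 \<and> k dvd n \<and> k \<noteq> 1}. totient k) * (p - 1)"
    using card_proper_skews_of_order[OF p n] card_admissible_multipliers[OF p] by simp
  moreover have "int (card (proper_skews_of_order n p)) \<le> int p ^ 2 - 3 * int p + 2"
    using card_proper_skews_of_order_le[OF p n] by (simp only: max[symmetric] of_nat_le_iff)
  moreover have "p dvd n \<Longrightarrow> int (card (proper_skews_of_order n p)) = int p ^ 2 - 3 * int p + 2
      \<longleftrightarrow> (p - 1) * p dvd n"
    using card_proper_skews_of_order_eq_max_iff[OF p n] by (simp only: max[symmetric] of_nat_eq_iff)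
  ultimately show ?thesis
    using ex_proper_skew_iff[OF p] proper_skews_of_order_nonempty_iff[OF p n] by blast
qed

end
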